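(* Let $b\in\mathcal E_1$ with $b-1$ flat at $0$, let $\theta$ be the inverse germ of $t\mapsto t\,b(t)$, write $\theta(x)=x\,c(x)$, let $\sigma(x)=\theta(x)^4$ with iterates $\sigma^n$ ($\sigma^0=\mathrm{id}$), and let $S(x)=\sum_{n=0}^{\infty}4^{-n}\log c(\sigma^n(x))$ (which converges on a neighbourhood of $0$). Then there exists $\varepsilon>0$ such that for every integer $p\ge0$ for which $S$ is of class $C^p$ on $(-\varepsilon,\varepsilon)$, writing $T=S^{(p)}$ and $\alpha=(\sigma')^p$, one has $$\lim_{n\to\infty}\frac{1}{4^n}\,\alpha(x)\,\alpha(\sigma(x))\cdots\alpha(\sigma^{n-1}(x))\,T(\sigma^n(x))=0\quad\text{for all }|x|<\varepsilon .$$
   Context: $\mathcal E_1$ denotes the ring of smooth function germs at $0\in\mathbb R$. A germ is flat at $0$ if all its derivatives (including its value) vanish at $0$. $S^{(p)}$ denotes the $p$-th derivative of $S$. *)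

theory Defs
  imports "HOL-Analysis.Analysis"
begin

definition Ck_on :: "nat \<Rightarrow> (real \<Rightarrow> real) \<Rightarrow> real set \<Rightarrow> bool" where
  "Ck_on p f U \<longleftrightarrow>
     (\<forall>k<p. \<forall>x\<in>U. ((deriv ^^ k) f) differentiable (at x)) \<and> continuous_on U ((deriv ^^ p) f)"

definition smooth_on :: "(real \<Rightarrow> real) \<Rightarrow> real set \<Rightarrow> bool" where
  "smooth_on f U \<longleftrightarrow> (\<forall>p. Ck_on p f U)"

definition smooth_germ :: "(real \<Rightarrow> real) \<Rightarrow> bool" where
  "smooth_germ f \<longleftrightarrow> (\<exists>r>0. smooth_on f {-r<..<r})"

definition flat_at0 :: "(real \<Rightarrow> real) \<Rightarrow> bool" where
  "flat_at0 f \<longleftrightarrow> (\<forall>k. (deriv ^^ k) f 0 = 0)"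

definition inverse_germ :: "(real \<Rightarrow> real) \<Rightarrow> (real \<Rightarrow> real) \<Rightarrow> bool" where
  "inverse_germ theta f \<longleftrightarrow>
     (\<exists>d>0. \<forall>t. \<bar>t\<bar> < d \<longrightarrow> theta (f t) = t) \<and>
     (\<exists>d>0. \<forall>x. \<bar>x\<bar> < d \<longrightarrow> f (theta x) = x)"

text \<open>c with theta(x) = x c(x); at 0, c takes its (smooth) limit value theta'(0) = 1.\<close>
definition cfun :: "(real \<Rightarrow> real) \<Rightarrow> real \<Rightarrow> real" where
  "cfun theta x = (if x = 0 then 1 else theta x / x)"

definition sigma :: "(real \<Rightarrow> real) \<Rightarrow> real \<Rightarrow> real" where
  "sigma theta x = (theta x) ^ 4"

definition Sfun :: "(real \<Rightarrow> real) \<Rightarrow> real \<Rightarrow> real" where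
  "Sfun theta x = (\<Sum>n. (1 / 4 ^ n) * ln (cfun theta ((sigma theta ^^ n) x)))"

end

theory Submission
  imports Defs
begin

text \<open>Then \<open>t \<mapsto> t b(t)\<close> has derivative \<open>\<ge> 1/2\<close> near 0, so its inverse satisfies
  \<open>|\<theta>(y)| \<le> 2|y|\<close> and \<open>|\<theta>'(y)| \<le> 2\<close>. For \<open>|y| \<le> 1/4\<close> this gives \<open>|\<sigma>(y)| \<le> |y|\<close> and
  \<open>|\<sigma>'(y)| = 4 |\<theta>'(y)| |\<theta>(y)|\<^sup>3 \<le> 4 \<cdot> 2 \<cdot> (1/2)\<^sup>3 = 1\<close>. Hence the orbit of \<open>x\<close> stays
  in the compact interval \<open>[-|x|, |x|]\<close>, on which the continuous \<open>T\<close> is bounded, and the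
  products of \<open>\<alpha>\<close> along the orbit are bounded by 1; the factor \<open>4\<^sup>-\<^sup>n\<close> forces the limit 0.\<close>

lemma derivative_lower_bound_imp_mono_on:
  fixes f g :: "real \<Rightarrow> real"
  assumes deriv: "\<And>t. t \<in> {a<..<b} \<Longrightarrow> (f has_real_derivative g t) (at t)"
    and lower: "\<And>t. t \<in> {a<..<b} \<Longrightarrow> m \<le> g t"
  shows "mono_on {a<..<b} (\<lambda>t. f t - m * t)"
proof (rule mono_onI)
  fix r s assume rs: "r \<in> {a<..<b}" "s \<in> {a<..<b}" "r \<le> s"
  then have sub: "{r..s} \<subseteq> {a<..<b}" by auto
  have h_deriv: "((\<lambda>t. f t - m * t) has_real_derivative g t - m) (at t)" if "t \<in> {r..s}" for t
    using deriv[of t] sub that by (auto intro!: derivative_eq_intros)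
  show "f r - m * r \<le> f s - m * s"
  proof (rule DERIV_nonneg_imp_increasing_open[OF \<open>r \<le> s\<close>])
    show "\<exists>y. ((\<lambda>t. f t - m * t) has_real_derivative y) (at x) \<and> 0 \<le> y" if "r < x" "x < s" for x
    proof -
      have "x \<in> {a<..<b}" using rs that by auto
      then show ?thesis using h_deriv[of x] lower[of x] that by (intro exI[of _ "g x - m"]) auto
    qed
    show "continuous_on {r..s} (\<lambda>t. f t - m * t)"
      using h_deriv by (meson DERIV_isCont continuous_at_imp_continuous_on)
  qed
qed

lemma preimage_near_0_of_derivative_ge_half:
  fixes f g :: "real \<Rightarrow> real"
  assumes f0: "f 0 = 0"
    and deriv: "\<And>t. \<bar>t\<bar> < R \<Longrightarrow> (f has_real_derivative g t) (at t)"
    and lower: "\<And>t. \<bar>t\<bar> < R \<Longrightarrow> 1/2 \<le> g t"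
    and y: "\<bar>y\<bar> < R/4"
  obtains t where "\<bar>t\<bar> \<le> R/2" "f t = y" "\<bar>t\<bar> \<le> 2 * \<bar>y\<bar>"
proof -
  have mono: "mono_on {-R<..<R} (\<lambda>t. f t - 1/2 * t)"
    by (rule derivative_lower_bound_imp_mono_on[where g = g])
      (use deriv lower in \<open>auto simp: abs_less_iff\<close>)
  have R: "0 < R" using y by linarith
  have pos: "t/2 \<le> f t" if "0 \<le> t" "t < R" for t
    using mono_onD[OF mono, of 0 t] f0 R that by simp
  have neg: "f t \<le> t/2" if "t \<le> 0" "-R < t" for t
    using mono_onD[OF mono, of t 0] f0 R that by simp
  have "isCont f t" if "\<bar>t\<bar> < R" for t
    using deriv[OF that] by (rule DERIV_isCont)
  then have "continuous_on {-R/2..R/2} f"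
    using R by (intro continuous_at_imp_continuous_on) auto
  moreover have "f (-R/2) \<le> y" "y \<le> f (R/2)"
    using pos[of "R/2"] neg[of "-R/2"] y R by auto
  ultimately obtain t where t: "-R/2 \<le> t" "t \<le> R/2" "f t = y"
    using IVT'[of f "-R/2" y "R/2"] R by auto
  moreover have "\<bar>t\<bar> \<le> 2 * \<bar>y\<bar>"
    using pos[of t] neg[of t] t R by (cases "0 \<le> t") auto
  ultimately show thesis using that[of t] by (simp add: abs_le_iff)
qed

lemma left_inverse_near_0_bounds:
  fixes f g theta :: "real \<Rightarrow> real"
  assumes f0: "f 0 = 0"
    and deriv: "\<And>t. \<bar>t\<bar> < R \<Longrightarrow> (f has_real_derivative g t) (at t)"
    and lower: "\<And>t. \<bar>t\<bar> < R \<Longrightarrow> 1/2 \<le> g t"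
    and inv: "\<And>t. \<bar>t\<bar> < R \<Longrightarrow> theta (f t) = t"
    and y: "\<bar>y\<bar> < R/4"
  shows "\<bar>theta y\<bar> \<le> 2 * \<bar>y\<bar>"
    and "\<exists>D. (theta has_real_derivative D) (at y) \<and> \<bar>D\<bar> \<le> 2"
proof -
  have R: "0 < R" using y by linarith
  have right_inv: "f (theta z) = z" if z: "\<bar>z\<bar> < R/4" for z
  proof -
    obtain t where "\<bar>t\<bar> \<le> R/2" "f t = z"
      using preimage_near_0_of_derivative_ge_half[OF f0 deriv lower z] by blast
    then show ?thesis using inv[of t] R by auto
  qed
  obtain t where t: "\<bar>t\<bar> \<le> R/2" "f t = y" "\<bar>t\<bar> \<le> 2 * \<bar>y\<bar>"
    using preimage_near_0_of_derivative_ge_half[OF f0 deriv lower y] .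
  have theta_y: "theta y = t" using inv[of t] t R by auto
  then show "\<bar>theta y\<bar> \<le> 2 * \<bar>y\<bar>" using t by simp
  have near_t: "\<bar>z\<bar> < R" if "\<bar>z - t\<bar> \<le> R/4" for z
    using that t(1) R by linarith
  have "isCont theta (f t)"
  proof (rule isCont_inverse_function[where d = "R/4" and f = f and g = theta])
    show "0 < R/4" using R by simp
    show "theta (f z) = z" if "\<bar>z - t\<bar> \<le> R/4" for z
      using inv near_t that by blast
    show "isCont f z" if "\<bar>z - t\<bar> \<le> R/4" for z
      using deriv near_t that DERIV_isCont by blast
  qed
  then have cont: "isCont theta y" using t(2) by simp
  have "(theta has_real_derivative inverse (g t)) (at y)"
  proof (rule DERIV_inverse_function[where f = f and a = "-R/4" and b = "R/4"])
    show "(f has_real_derivative g t) (at (theta y))" using deriv[of t] theta_y t R by simp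
    show "g t \<noteq> 0" using lower[of t] t R by simp
    show "-R/4 < y" "y < R/4" using y by auto
    show "f (theta z) = z" if "-R/4 < z" "z < R/4" for z using right_inv that by simp
    show "isCont theta y" by (rule cont)
  qed
  moreover have "\<bar>inverse (g t)\<bar> \<le> 2"
  proof -
    have "1/2 \<le> g t" using lower[of t] t R by simp
    then have "inverse (g t) \<le> inverse (1/2)" by (intro le_imp_inverse_le) auto
    then show ?thesis using \<open>1/2 \<le> g t\<close> by simp
  qed
  ultimately show "\<exists>D. (theta has_real_derivative D) (at y) \<and> \<bar>D\<bar> \<le> 2" by blast
qed

lemma sigma_near_0_bounds:
  fixes theta :: "real \<Rightarrow> real"
  assumes theta_y: "\<bar>theta y\<bar> \<le> 2 * \<bar>y\<bar>"
    and D: "(theta has_real_derivative D) (at y)" "\<bar>D\<bar> \<le> 2"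
    and y: "\<bar>y\<bar> \<le> 1/4"
  shows "\<bar>sigma theta y\<bar> \<le> \<bar>y\<bar>"
    and "\<bar>deriv (sigma theta) y\<bar> \<le> 1"
proof -
  have cube: "\<bar>theta y\<bar> ^ 3 \<le> (1/2) ^ 3"
    using theta_y y by (intro power_mono) auto
  have "\<bar>sigma theta y\<bar> = \<bar>theta y\<bar> ^ 3 * \<bar>theta y\<bar>"
    by (simp add: sigma_def power_abs power_Suc2 [symmetric] del: power_Suc2)
  also have "\<dots> \<le> (1/2) ^ 3 * (2 * \<bar>y\<bar>)"
    using cube theta_y by (intro mult_mono) auto
  also have "\<dots> \<le> \<bar>y\<bar>" by (simp add: power_divide)
  finally show "\<bar>sigma theta y\<bar> \<le> \<bar>y\<bar>" .
  have "(sigma theta has_real_derivative 4 * (D * theta y ^ 3)) (at y)"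
    unfolding sigma_def[abs_def] using DERIV_power[OF D(1), of 4] by simp
  then have "\<bar>deriv (sigma theta) y\<bar> = 4 * (\<bar>D\<bar> * \<bar>theta y\<bar> ^ 3)"
    by (simp add: DERIV_imp_deriv abs_mult power_abs)
  also have "\<dots> \<le> 4 * (2 * (1/2) ^ 3)"
    using D(2) cube by (intro mult_left_mono mult_mono) auto
  finally show "\<bar>deriv (sigma theta) y\<bar> \<le> 1" by (simp add: power_divide)
qed

lemma funpow_abs_le_of_abs_le:
  fixes s :: "real \<Rightarrow> real"
  assumes contract: "\<And>y. \<bar>y\<bar> < \<epsilon> \<Longrightarrow> \<bar>s y\<bar> \<le> \<bar>y\<bar>"
    and x: "\<bar>x\<bar> < \<epsilon>"
  shows "\<bar>(s ^^ n) x\<bar> \<le> \<bar>x\<bar>"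
proof (induction n)
  case 0
  then show ?case by simp
next
  case (Suc n)
  then have "\<bar>s ((s ^^ n) x)\<bar> \<le> \<bar>(s ^^ n) x\<bar>" using contract x by simp
  then show ?case using Suc by simp
qed

lemma power_decay_times_bounded_tendsto_0:
  fixes a c :: "nat \<Rightarrow> real"
  assumes q: "1 < q"
    and a: "\<And>k. \<bar>a k\<bar> \<le> 1"
    and c: "\<And>n. \<bar>c n\<bar> \<le> B"
  shows "(\<lambda>n. (1 / q ^ n) * (\<Prod>k<n. a k) * c n) \<longlonglongrightarrow> 0"
proof (rule Lim_null_comparison)
  have "\<bar>\<Prod>k<n. a k\<bar> \<le> 1" for n
    unfolding abs_prod using a by (intro prod_le_1) auto
  then have "\<bar>\<Prod>k<n. a k\<bar> * \<bar>c n\<bar> \<le> 1 * B" for n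
    using c by (intro mult_mono) auto
  then have "\<bar>1 / q ^ n * (\<Prod>k<n. a k) * c n\<bar> \<le> 1 / q ^ n * B" for n
    using q by (simp add: abs_mult divide_right_mono)
  then show "\<forall>\<^sub>F n in sequentially. norm (1 / q ^ n * (\<Prod>k<n. a k) * c n) \<le> B * (1 / q) ^ n"
    by (simp add: power_one_over mult.commute)
  have "(\<lambda>n. B * (1 / q) ^ n) \<longlonglongrightarrow> B * 0"
    using q by (intro tendsto_mult tendsto_const LIMSEQ_power_zero) auto
  then show "(\<lambda>n. B * (1 / q) ^ n) \<longlonglongrightarrow> 0" by simp
qed

lemma weighted_orbit_tendsto_0:
  fixes s T :: "real \<Rightarrow> real"
  assumes contract: "\<And>y. \<bar>y\<bar> < \<epsilon> \<Longrightarrow> \<bar>s y\<bar> \<le> \<bar>y\<bar>"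
    and deriv_le: "\<And>y. \<bar>y\<bar> < \<epsilon> \<Longrightarrow> \<bar>deriv s y\<bar> \<le> 1"
    and T: "continuous_on {-\<epsilon><..<\<epsilon>} T"
    and x: "\<bar>x\<bar> < \<epsilon>"
  shows "(\<lambda>n. (1 / 4 ^ n) * (\<Prod>k<n. deriv s ((s ^^ k) x) ^ p) * T ((s ^^ n) x)) \<longlonglongrightarrow> 0"
proof -
  have orbit: "(s ^^ n) x \<in> {-\<bar>x\<bar>..\<bar>x\<bar>}" for n
    using funpow_abs_le_of_abs_le[OF contract x, of n] by (auto simp: abs_le_iff)
  have "continuous_on {-\<bar>x\<bar>..\<bar>x\<bar>} T"
    using x by (auto intro: continuous_on_subset[OF T])
  then obtain B where B: "\<And>y. y \<in> {-\<bar>x\<bar>..\<bar>x\<bar>} \<Longrightarrow> \<bar>T y\<bar> \<le> B"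
    using continuous_on_compact_bound[of "{-\<bar>x\<bar>..\<bar>x\<bar>}" T] by auto
  have "\<bar>deriv s ((s ^^ k) x) ^ p\<bar> \<le> 1" for k
    using deriv_le[of "(s ^^ k) x"] funpow_abs_le_of_abs_le[OF contract x, of k] x
    by (simp add: power_abs power_le_one)
  then show ?thesis
    using B orbit by (intro power_decay_times_bounded_tendsto_0) auto
qed

lemma eventually_times_germ_derivative_ge_half:
  fixes b :: "real \<Rightarrow> real"
  assumes "smooth_germ b" "b 0 = 1"
  shows "\<forall>\<^sub>F t in nhds 0. ((\<lambda>t. t * b t) has_real_derivative b t + t * deriv b t) (at t)
                          \<and> 1/2 < b t + t * deriv b t"
proof -
  obtain r where r: "r > 0" "Ck_on 1 b {-r<..<r}"
    using assms(1) unfolding smooth_germ_def smooth_on_def by blast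
  have near: "\<forall>\<^sub>F t in nhds 0. t \<in> {-r<..<r}"
    using r(1) by (intro eventually_nhds_in_open) auto
  have b_deriv: "(b has_real_derivative deriv b t) (at t)" if "t \<in> {-r<..<r}" for t
    using r(2) that by (simp add: Ck_on_def DERIV_deriv_iff_real_differentiable)
  have "isCont b 0" "isCont (deriv b) 0"
    using b_deriv[THEN DERIV_isCont, of 0] r continuous_on_eq_continuous_at[of "{-r<..<r}" "deriv b"]
    by (auto simp: Ck_on_def)
  then have "isCont (\<lambda>t. b t + t * deriv b t) 0"
    by (intro continuous_intros)
  then have "((\<lambda>t. b t + t * deriv b t) \<longlongrightarrow> 1) (nhds 0)"
    using assms(2) tendsto_at_iff_tendsto_nhds[of "\<lambda>t. b t + t * deriv b t" 0]
    by (simp add: isCont_def)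
  then have "\<forall>\<^sub>F t in nhds 0. 1/2 < b t + t * deriv b t"
    by (rule order_tendstoD) simp
  with near show ?thesis
    by eventually_elim (auto intro!: derivative_eq_intros b_deriv)
qed

theorem lemma3p10:
  fixes b theta :: "real \<Rightarrow> real"
  assumes "smooth_germ b"
    and "flat_at0 (\<lambda>t. b t - 1)"
    and "inverse_germ theta (\<lambda>t. t * b t)"
  shows "\<exists>\<epsilon>>0. \<forall>p::nat. Ck_on p (Sfun theta) {-\<epsilon><..<\<epsilon>} \<longrightarrow>
           (\<forall>x. \<bar>x\<bar> < \<epsilon> \<longrightarrow>
              (\<lambda>n. (1 / 4 ^ n) * (\<Prod>k<n. (deriv (sigma theta) ((sigma theta ^^ k) x)) ^ p)
                    * (deriv ^^ p) (Sfun theta) ((sigma theta ^^ n) x)) \<longlonglongrightarrow> 0)"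
proof -
  define f g where "f t = t * b t" and "g t = b t + t * deriv b t" for t
  have "b 0 = 1"
    using assms(2) unfolding flat_at0_def by (metis funpow_0 eq_iff_diff_eq_0)
  obtain d where "d > 0" "\<And>t. \<bar>t\<bar> < d \<Longrightarrow> theta (f t) = t"
    using assms(3) unfolding inverse_germ_def f_def by blast
  then have "\<forall>\<^sub>F t in nhds 0. theta (f t) = t"
    by (auto simp: eventually_nhds_metric dist_real_def)
  with eventually_times_germ_derivative_ge_half[OF assms(1) \<open>b 0 = 1\<close>]
  have "\<forall>\<^sub>F t in nhds 0. (f has_real_derivative g t) (at t) \<and> 1/2 \<le> g t \<and> theta (f t) = t"
    unfolding f_def g_def
    by eventually_elim auto
  then obtain R where "R > 0" and R: "\<And>t. \<bar>t\<bar> < R \<Longrightarrow>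
      (f has_real_derivative g t) (at t) \<and> 1/2 \<le> g t \<and> theta (f t) = t"
    by (auto simp: eventually_nhds_metric dist_real_def)
  define \<epsilon> where "\<epsilon> = min (R/4) (1/4)"
  have sigma_bounds: "\<bar>sigma theta y\<bar> \<le> \<bar>y\<bar> \<and> \<bar>deriv (sigma theta) y\<bar> \<le> 1" if "\<bar>y\<bar> < \<epsilon>" for y
    using left_inverse_near_0_bounds[of f R g theta y] sigma_near_0_bounds[of theta y] R that
    by (auto simp: \<epsilon>_def f_def)
  show ?thesis
  proof (intro exI[of _ \<epsilon>] conjI allI impI)
    show "\<epsilon> > 0" using \<open>R > 0\<close> by (simp add: \<epsilon>_def)
  next
    fix p x assume "Ck_on p (Sfun theta) {-\<epsilon><..<\<epsilon>}" "\<bar>x\<bar> < \<epsilon>"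
    then show "(\<lambda>n. (1 / 4 ^ n) * (\<Prod>k<n. (deriv (sigma theta) ((sigma theta ^^ k) x)) ^ p)
                    * (deriv ^^ p) (Sfun theta) ((sigma theta ^^ n) x)) \<longlonglongrightarrow> 0"
      using sigma_bounds by (intro weighted_orbit_tendsto_0) (auto simp: Ck_on_def)
  qed
qed

end
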